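(* Let $\mathrm{N}\ge 1$ and let the rows and the columns of complex $\mathrm{N}\times\mathrm{N}$ matrices be indexed by finite sets of real labels $\{p\}$ (rows) and $\{p'\}$ (columns), so that a matrix $M$ has entries $M_{p_1p_2}$. Let $E_k(p_1,p_2):=p_1+p_2+m+R_k(p_1,p_2)$, where $m\in\mathbb{R}$ and $R_k$ is a real-valued function of two labels. Define $$H[M,\overline{M}]:=\sum_{p_1,p_2}\overline{M}_{p_1p_2}\,E_k(p_1,p_2)\,M_{p_1p_2}+\sum_{q\ge 2}\frac{a_q\,\mathrm{N}^{-q+1}}{(q!)^2}\,\mathrm{Tr}\,(M^\dagger M)^q$$ with real coefficients $a_q$, and for complex source matrices $L$ the partition function $$Z[L,\overline{L}]:=\int \mathrm{d}M\,\mathrm{d}\overline{M}\;e^{-H[M,\overline{M}]+\overline{L}\cdot M+\overline{M}\cdot L},\qquad A\cdot B:=\sum_{i,j}A_{ij}B_{ij},$$ where $\mathrm{d}M\,\mathrm{d}\overline{M}$ is the Lebesgue measure on $\mathbb{C}^{\mathrm{N}\times\mathrm{N}}$. Then for all row labels $p_1,p_1'$, $$\sum_{p_2}\Bigg(\delta E_k(p_1,p_1',p_2)\,\frac{\partial^2}{\partial L_{p_1p_2}\,\partial\overline{L}_{p_1'p_2}}+\overline{L}_{p_1p_2}\frac{\partial}{\partial\overline{L}_{p_1'p_2}}-L_{p_1'p_2}\frac{\partial}{\partial L_{p_1p_2}}\Bigg)Z[L,\overline{L}]=0,$$ where $\delta E_k(p_1,p_1',p_2):=E_k(p_1',p_2)-E_k(p_1,p_2)=(p_1'-p_1)+R_k(p_1',p_2)-R_k(p_1,p_2)$,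 the sum runs over column labels $p_2$, and $L,\overline{L}$ are treated as independent variables.
   Context: $\overline{M}$ denotes the entrywise complex conjugate of $M$ and $M^\dagger$ its conjugate transpose. The derivatives are defined so that $\partial Z/\partial\overline{L}_{ij}=\int M_{ij}\,e^{\cdots}$ and $\partial Z/\partial L_{ij}=\int \overline{M}_{ij}\,e^{\cdots}$. It is assumed that the integral defining $Z$, and the integrals obtained by differentiating under the integral sign with respect to the sources, converge absolutely (e.g. finitely many nonzero $a_q$ with the highest one positive). *)

theory Defs
  imports "HOL-Analysis.Analysis"
begin

text \<open>Complex matrices with rows indexed by the finite type 'r and columns by the
finite type 'c; the real labels of rows/columns are given by lr / lc.\<close>

primrec mpow :: "'a::semiring_1^'n^'n \<Rightarrow> nat \<Rightarrow> 'a^'n^'n" where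
  "mpow A 0 = mat 1"
| "mpow A (Suc n) = A ** mpow A n"

definition adj :: "complex^'c^'r \<Rightarrow> complex^'r^'c" where
  "adj M = (\<chi> j i. cnj (M$i$j))"

definition mconj :: "complex^'c^'r \<Rightarrow> complex^'c^'r" where
  "mconj M = (\<chi> i j. cnj (M$i$j))"

definition mdot :: "complex^'c^'r \<Rightarrow> complex^'c^'r \<Rightarrow> complex" where
  "mdot A B = (\<Sum>i\<in>UNIV. \<Sum>j\<in>UNIV. A$i$j * B$i$j)"

definition Ek :: "('r \<Rightarrow> real) \<Rightarrow> ('c \<Rightarrow> real) \<Rightarrow> real \<Rightarrow> (real \<Rightarrow> real \<Rightarrow> real) \<Rightarrow> 'r \<Rightarrow> 'c \<Rightarrow> real" where
  "Ek lr lc m R i j = lr i + lc j + m + R (lr i) (lc j)"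

definition pot_term :: "(nat \<Rightarrow> real) \<Rightarrow> complex^'c^'r \<Rightarrow> nat \<Rightarrow> complex" where
  "pot_term a M q = (if 2 \<le> q
     then complex_of_real (a q / (real CARD('r) ^ (q - 1) * (fact q)^2)) * trace (mpow (adj M ** M) q)
     else 0)"

definition Hfun :: "('r \<Rightarrow> real) \<Rightarrow> ('c \<Rightarrow> real) \<Rightarrow> real \<Rightarrow> (real \<Rightarrow> real \<Rightarrow> real) \<Rightarrow> (nat \<Rightarrow> real)
    \<Rightarrow> complex^'c^'r \<Rightarrow> complex" where
  "Hfun lr lc m R a M =
     (\<Sum>i\<in>UNIV. \<Sum>j\<in>UNIV. cnj (M$i$j) * complex_of_real (Ek lr lc m R i j) * M$i$j)
     + (\<Sum>q. pot_term a M q)"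

text \<open>Integrand of Z; K plays the role of the independent variable L-bar.\<close>
definition integrand :: "('r \<Rightarrow> real) \<Rightarrow> ('c \<Rightarrow> real) \<Rightarrow> real \<Rightarrow> (real \<Rightarrow> real \<Rightarrow> real) \<Rightarrow> (nat \<Rightarrow> real)
    \<Rightarrow> complex^'c^'r \<Rightarrow> complex^'c^'r \<Rightarrow> complex^'c^'r \<Rightarrow> complex" where
  "integrand lr lc m R a L K M = exp (- Hfun lr lc m R a M + mdot K M + mdot (mconj M) L)"

definition Zfun :: "('r \<Rightarrow> real) \<Rightarrow> ('c \<Rightarrow> real) \<Rightarrow> real \<Rightarrow> (real \<Rightarrow> real \<Rightarrow> real) \<Rightarrow> (nat \<Rightarrow> real)
    \<Rightarrow> complex^'c^'r \<Rightarrow> complex^'c^'r \<Rightarrow> complex" where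
  "Zfun lr lc m R a L K = integral\<^sup>L lborel (integrand lr lc m R a L K)"

definition mupd :: "'a^'c^'r \<Rightarrow> 'r \<Rightarrow> 'c \<Rightarrow> 'a \<Rightarrow> 'a^'c^'r" where
  "mupd L i j z = (\<chi> a b. if a = i \<and> b = j then z else L$a$b)"

definition dL :: "(complex^'c^'r \<Rightarrow> complex^'c^'r \<Rightarrow> complex) \<Rightarrow> 'r \<Rightarrow> 'c
    \<Rightarrow> complex^'c^'r \<Rightarrow> complex^'c^'r \<Rightarrow> complex" where
  "dL F i j L K = deriv (\<lambda>z. F (mupd L i j z) K) (L$i$j)"

definition dK :: "(complex^'c^'r \<Rightarrow> complex^'c^'r \<Rightarrow> complex) \<Rightarrow> 'r \<Rightarrow> 'c
    \<Rightarrow> complex^'c^'r \<Rightarrow> complex^'c^'r \<Rightarrow> complex" where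
  "dK F i j L K = deriv (\<lambda>z. F L (mupd K i j z)) (K$i$j)"

end

(* The identity is the Ward identity of the U(N) symmetry acting on the rows of M. Left
   multiplication by a unitary matrix preserves Lebesgue measure and Tr (M^dagger M)^q, so along a
   one-parameter group of such rotations exp (s G) only the quadratic part S = - Mbar E M + Lbar.M
   + Mbar.L of the exponent changes, and since the measure is invariant the integral of the
   derivative vanishes: int e^(-H + Lbar.M + Mbar.L) dS(M)[G M] dM = 0. Combining the generators i E_pp,
   E_qp - E_pq and i (E_pq + E_qp) isolates the elementary matrix E_(p1' p1), and the resulting
   moments of M and Mbar are the source derivatives of Z, by differentiation under the integral
   sign. *)

theory Submission
  imports Defs
begin

section \<open>Invariance of Lebesgue measure under orthogonal maps\<close>

lemma borel_measurable_linear: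
  fixes f :: "'a::euclidean_space \<Rightarrow> 'b::euclidean_space"
  shows "linear f \<Longrightarrow> f \<in> borel_measurable borel"
  by (intro borel_measurable_continuous_onI linear_continuous_on) (simp add: linear_conv_bounded_linear)

text \<open>A linear map that permutes the coordinate axes maps boxes to boxes of the same volume.\<close>

lemma distr_lborel_coordinate_bijection:
  fixes \<phi> :: "'a::euclidean_space \<Rightarrow> 'b::euclidean_space" and \<psi> :: "'b \<Rightarrow> 'a"
  assumes g: "bij_betw g (Basis::'a set) (Basis::'b set)"
    and \<phi>_coord: "\<And>x b. b \<in> Basis \<Longrightarrow> \<phi> x \<bullet> g b = x \<bullet> b"
    and \<psi>_coord: "\<And>y b. b \<in> Basis \<Longrightarrow> \<psi> y \<bullet> b = y \<bullet> g b"
    and "linear \<phi>"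
  shows "distr lborel borel \<phi> = lborel"
proof (rule lborel_eqI[symmetric])
  fix l u :: 'b
  assume lu: "\<And>b. b \<in> Basis \<Longrightarrow> l \<bullet> b \<le> u \<bullet> b"
  have gB: "b \<in> Basis \<Longrightarrow> g b \<in> Basis" for b
    using g bij_betwE by blast
  have g_surj: "c \<in> Basis \<Longrightarrow> \<exists>b\<in>Basis. c = g b" for c
    using g by (auto simp: bij_betw_def)
  have "x \<in> \<phi> -` box l u \<longleftrightarrow> x \<in> box (\<psi> l) (\<psi> u)" for x
  proof -
    have "x \<in> \<phi> -` box l u \<longleftrightarrow> (\<forall>c\<in>Basis. l \<bullet> c < \<phi> x \<bullet> c \<and> \<phi> x \<bullet> c < u \<bullet> c)"
      by (simp add: mem_box)
    also have "\<dots> \<longleftrightarrow> (\<forall>b\<in>Basis. l \<bullet> g b < \<phi> x \<bullet> g b \<and> \<phi> x \<bullet> g b < u \<bullet> g b)"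
      using gB g_surj by (metis (no_types, lifting))
    finally show ?thesis
      by (simp add: mem_box \<phi>_coord \<psi>_coord)
  qed
  then have preimage: "\<phi> -` box l u = box (\<psi> l) (\<psi> u)"
    by blast
  have "emeasure (distr lborel borel \<phi>) (box l u) = emeasure lborel (box (\<psi> l) (\<psi> u))"
    using borel_measurable_linear[OF \<open>linear \<phi>\<close>] by (simp add: emeasure_distr preimage)
  also have "\<dots> = ennreal (\<Prod>b\<in>Basis. (u - l) \<bullet> g b)"
    using lu by (simp add: emeasure_lborel_box_eq \<psi>_coord gB inner_diff_left cong: prod.cong)
  also have "(\<Prod>b\<in>Basis. (u - l) \<bullet> g b) = (\<Prod>c\<in>Basis. (u - l) \<bullet> c)"
    using prod.reindex_bij_betw[OF g, of "\<lambda>c. (u - l) \<bullet> c"] by simp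
  finally show "emeasure (distr lborel borel \<phi>) (box l u) = ennreal (\<Prod>c\<in>Basis. (u - l) \<bullet> c)" .
qed simp

lemma exists_isometry_preserving_lborel:
  assumes "DIM('a::euclidean_space) = DIM('b::euclidean_space)"
  obtains \<phi> :: "'a::euclidean_space \<Rightarrow> 'b::euclidean_space" and \<psi> :: "'b \<Rightarrow> 'a"
  where "\<And>y. \<phi> (\<psi> y) = y" and "\<And>x. \<psi> (\<phi> x) = x" and "linear \<phi>" and "linear \<psi>"
    and "\<And>x y. \<phi> x \<bullet> \<phi> y = x \<bullet> y" and "distr lborel borel \<phi> = lborel"
proof -
  obtain g where g: "bij_betw g (Basis::'a set) (Basis::'b set)"
    using finite_same_card_bij[of "Basis::'a set" "Basis::'b set"] assms by auto
  have gB: "b \<in> Basis \<Longrightarrow> g b \<in> Basis" for b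
    using g bij_betwE by blast
  have g_eq_iff: "b \<in> Basis \<Longrightarrow> b' \<in> Basis \<Longrightarrow> g b = g b' \<longleftrightarrow> b = b'" for b b'
    using g by (auto simp: bij_betw_def inj_on_def)
  define \<phi> where "\<phi> x = (\<Sum>b\<in>Basis. (x \<bullet> b) *\<^sub>R g b)" for x :: 'a
  define \<psi> where "\<psi> y = (\<Sum>b\<in>Basis. (y \<bullet> g b) *\<^sub>R b)" for y :: 'b
  have \<phi>_coord: "\<phi> x \<bullet> g b = x \<bullet> b" if b: "b \<in> Basis" for x b
  proof -
    have "\<phi> x \<bullet> g b = (\<Sum>b'\<in>Basis. (x \<bullet> b') * (g b' \<bullet> g b))"
      by (simp add: \<phi>_def inner_sum_left)
    also have "\<dots> = (\<Sum>b'\<in>Basis. if b' = b then x \<bullet> b' else 0)"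
      by (intro sum.cong refl) (auto simp: inner_Basis gB b g_eq_iff)
    finally show ?thesis using b by simp
  qed
  have \<psi>_coord: "\<psi> y \<bullet> b = y \<bullet> g b" if "b \<in> Basis" for y b
    using that by (simp add: \<psi>_def inner_sum_left inner_Basis if_distrib cong: if_cong)
  have \<psi>_\<phi>: "\<psi> (\<phi> x) = x" for x
    by (simp add: \<psi>_def \<phi>_coord euclidean_representation cong: sum.cong)
  have \<phi>_\<psi>: "\<phi> (\<psi> y) = y" for y
  proof -
    have "\<phi> (\<psi> y) = (\<Sum>b\<in>Basis. (y \<bullet> g b) *\<^sub>R g b)"
      by (simp add: \<phi>_def \<psi>_coord cong: sum.cong)
    also have "\<dots> = (\<Sum>c\<in>Basis. (y \<bullet> c) *\<^sub>R c)"
      using sum.reindex_bij_betw[OF g, of "\<lambda>c. (y \<bullet> c) *\<^sub>R c"] by simp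
    finally show ?thesis by (simp add: euclidean_representation)
  qed
  have "linear \<phi>" "linear \<psi>"
    unfolding \<phi>_def \<psi>_def
    by (intro linearI; simp add: inner_add_left scaleR_add_left sum.distrib scaleR_sum_right)+
  have \<phi>_inner: "\<phi> x \<bullet> \<phi> y = x \<bullet> y" for x y
  proof -
    have "\<phi> x \<bullet> \<phi> y = (\<Sum>c\<in>Basis. (\<phi> x \<bullet> c) * (\<phi> y \<bullet> c))"
      by (rule euclidean_inner)
    also have "\<dots> = (\<Sum>b\<in>Basis. (\<phi> x \<bullet> g b) * (\<phi> y \<bullet> g b))"
      using sum.reindex_bij_betw[OF g, of "\<lambda>c. (\<phi> x \<bullet> c) * (\<phi> y \<bullet> c)"] by simp
    finally show ?thesis
      by (simp add: \<phi>_coord euclidean_inner[of x y])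
  qed
  have "distr lborel borel \<phi> = lborel"
    using g \<phi>_coord \<psi>_coord \<open>linear \<phi>\<close> by (rule distr_lborel_coordinate_bijection)
  then show thesis
    using that \<phi>_\<psi> \<psi>_\<phi> \<open>linear \<phi>\<close> \<open>linear \<psi>\<close> \<phi>_inner by blast
qed

lemma distr_lborel_orthogonal_transformation_vec:
  fixes h :: "real^'m::{finite,wellorder} \<Rightarrow> real^'m::_"
  assumes h: "orthogonal_transformation h"
  shows "distr lborel borel h = lborel"
proof (rule lborel_eqI[symmetric])
  fix l u :: "real^'m::_"
  assume lu: "\<And>b. b \<in> Basis \<Longrightarrow> l \<bullet> b \<le> u \<bullet> b"
  have h_meas: "h \<in> borel_measurable borel"
    using h orthogonal_transformation_linear borel_measurable_linear by blast
  have h_inv: "orthogonal_transformation (inv h)"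
    using h orthogonal_transformation_inv by blast
  have preimage: "h -` box l u = inv h ` box l u"
    using h orthogonal_transformation_bij bij_vimage_eq_inv_image by blast
  have "emeasure (distr lborel borel h) (box l u) = emeasure lebesgue (h -` box l u)"
    using h_meas by (simp add: emeasure_distr emeasure_completion main_part measurable_sets_borel)
  also have "\<dots> = measure lebesgue (inv h ` box l u)"
    unfolding preimage by (intro emeasure_eq_measure2 measurable_orthogonal_image h_inv) auto
  also have "\<dots> = measure lborel (box l u)"
    using measure_orthogonal_image[OF h_inv, of "box l u"] by simp
  finally show "emeasure (distr lborel borel h) (box l u) = ennreal (\<Prod>b\<in>Basis. (u - l) \<bullet> b)"
    using lu by (simp add: emeasure_eq_measure2 emeasure_lborel_box_eq)
qed simp

text \<open>The type \<open>'m\<close> only supplies a coordinate space \<open>real^'m\<close> of the right dimension, where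
  the change of variables formula of the library is available.\<close>

lemma distr_lborel_orthogonal_transformation:
  fixes f :: "'a::euclidean_space \<Rightarrow> 'a"
  assumes "DIM('a) = CARD('m::{finite,wellorder})" and f: "orthogonal_transformation f"
  shows "distr lborel borel f = lborel"
proof -
  have "DIM('a) = DIM(real^'m::_)"
    using assms by simp
  then obtain \<phi> :: "'a \<Rightarrow> real^'m::_" and \<psi> where
    \<phi>_\<psi>: "\<And>y. \<phi> (\<psi> y) = y" and \<psi>_\<phi>: "\<And>x. \<psi> (\<phi> x) = x" and "linear \<phi>" "linear \<psi>"
    and \<phi>_inner: "\<And>x y. \<phi> x \<bullet> \<phi> y = x \<bullet> y" and \<phi>_lborel: "distr lborel borel \<phi> = lborel"
    by (rule exists_isometry_preserving_lborel) blast
  define h where "h = \<phi> \<circ> f \<circ> \<psi>"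
  have "linear f"
    using f orthogonal_transformation_linear by blast
  have "orthogonal_transformation h"
    unfolding orthogonal_transformation_def h_def
  proof (intro conjI allI)
    show "linear (\<phi> \<circ> f \<circ> \<psi>)"
      using \<open>linear \<phi>\<close> \<open>linear \<psi>\<close> \<open>linear f\<close> by (intro linear_compose)
    fix v w
    show "(\<phi> \<circ> f \<circ> \<psi>) v \<bullet> (\<phi> \<circ> f \<circ> \<psi>) w = v \<bullet> w"
      using f \<phi>_inner[of "\<psi> v" "\<psi> w"] by (simp add: \<phi>_inner \<phi>_\<psi> orthogonal_transformation_def)
  qed
  then have h_lborel: "distr lborel borel h = lborel"
    by (rule distr_lborel_orthogonal_transformation_vec)
  have meas: "\<phi> \<in> borel_measurable borel" "\<psi> \<in> borel_measurable borel" "h \<in> borel_measurable borel"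
    unfolding h_def using \<open>linear \<phi>\<close> \<open>linear \<psi>\<close> \<open>linear f\<close>
    by (auto intro!: borel_measurable_linear linear_compose)
  have "f = \<psi> \<circ> h \<circ> \<phi>"
    by (simp add: h_def fun_eq_iff \<psi>_\<phi>)
  then have "distr lborel borel f = distr (distr (distr lborel borel \<phi>) borel h) borel \<psi>"
    using meas by (simp add: distr_distr comp_assoc)
  also have "\<dots> = distr (distr lborel borel \<phi>) borel \<psi>"
    by (simp add: \<phi>_lborel h_lborel)
  also have "\<dots> = distr lborel borel (\<lambda>x. x)"
    using meas by (simp add: distr_distr o_def \<psi>_\<phi>)
  finally show ?thesis
    by (simp add: distr_id2)
qed

section \<open>Differentiation under the integral sign\<close>

lemma exp_abs_le_exp_add_exp_minus: "exp \<bar>a::real\<bar> \<le> exp a + exp (- a)"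
  by (cases "a \<ge> 0") (auto simp: add_increasing2 add_increasing)

lemma exp_norm_le_sum_norm_exp:
  fixes w :: complex
  shows "exp (cmod w) \<le> cmod (exp ((1 + \<i>) * w)) + cmod (exp ((1 - \<i>) * w))
    + cmod (exp ((- 1 + \<i>) * w)) + cmod (exp ((- 1 - \<i>) * w))"
proof -
  define a b where "a = Re w" and "b = Im w"
  have "exp (cmod w) \<le> exp \<bar>a\<bar> * exp \<bar>b\<bar>"
    using cmod_le[of w] by (simp add: a_def b_def flip: exp_add)
  also have "\<dots> \<le> (exp a + exp (- a)) * (exp b + exp (- b))"
    by (intro mult_mono exp_abs_le_exp_add_exp_minus) (auto intro: add_nonneg_nonneg)
  also have "\<dots> = exp (a - b) + exp (a + b) + exp (- a - b) + exp (- a + b)"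
    by (simp add: algebra_simps flip: exp_add)
  also have "\<dots> = cmod (exp ((1 + \<i>) * w)) + cmod (exp ((1 - \<i>) * w))
      + cmod (exp ((- 1 + \<i>) * w)) + cmod (exp ((- 1 - \<i>) * w))"
    by (simp add: norm_exp_eq_Re a_def b_def algebra_simps)
  finally show ?thesis .
qed

lemma norm_exp_diff_quotient_le:
  fixes h w :: complex
  assumes "h \<noteq> 0" "cmod h \<le> 1"
  shows "cmod ((exp (h * w) - 1) / h) \<le> cmod w * exp (cmod w)"
proof -
  have "cmod (exp (h * w) - 1) \<le> exp (cmod (h * w)) * cmod (h * w)"
    using Taylor_exp_field[of "h * w" 0] by simp
  also have "\<dots> \<le> exp (cmod w) * (cmod h * cmod w)"
    using assms by (intro mult_mono) (auto simp: norm_mult mult_left_le_one_le)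
  finally show ?thesis
    using assms by (simp add: norm_divide divide_le_eq mult_ac)
qed

lemma norm_scaled_exp_diff_quotient_le:
  fixes c h z0 \<phi> :: complex
  assumes "h \<noteq> 0" "cmod h \<le> 1"
  shows "cmod (c * exp (z0 * \<phi>) * ((exp (h * \<phi>) - 1) / h))
    \<le> cmod (\<phi> * (c * exp ((z0 + (1 + \<i>)) * \<phi>))) + cmod (\<phi> * (c * exp ((z0 + (1 - \<i>)) * \<phi>)))
      + cmod (\<phi> * (c * exp ((z0 + (- 1 + \<i>)) * \<phi>))) + cmod (\<phi> * (c * exp ((z0 + (- 1 - \<i>)) * \<phi>)))"
proof -
  have "cmod (c * exp (z0 * \<phi>) * ((exp (h * \<phi>) - 1) / h))
      \<le> cmod (c * exp (z0 * \<phi>)) * (cmod \<phi> * exp (cmod \<phi>))"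
    unfolding norm_mult[of "c * exp (z0 * \<phi>)"]
    by (intro mult_left_mono norm_exp_diff_quotient_le assms) auto
  also have "\<dots> \<le> cmod (c * exp (z0 * \<phi>)) * (cmod \<phi> *
      (cmod (exp ((1 + \<i>) * \<phi>)) + cmod (exp ((1 - \<i>) * \<phi>))
       + cmod (exp ((- 1 + \<i>) * \<phi>)) + cmod (exp ((- 1 - \<i>) * \<phi>))))"
    by (intro mult_left_mono exp_norm_le_sum_norm_exp) auto
  finally show ?thesis
    by (simp add: norm_mult distrib_left distrib_right exp_add mult_ac)
qed

lemma tendsto_exp_diff_quotient:
  fixes h :: "'i \<Rightarrow> complex"
  assumes "filterlim h (at 0) F"
  shows "((\<lambda>i. (exp (h i * \<phi>) - 1) / h i) \<longlongrightarrow> \<phi>) F"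
proof -
  have "((\<lambda>t. exp (t * \<phi>)) has_field_derivative \<phi>) (at 0)"
    by (auto intro!: derivative_eq_intros)
  then have "((\<lambda>t. (exp (t * \<phi>) - 1) / t) \<longlongrightarrow> \<phi>) (at 0)"
    by (simp add: has_field_derivative_iff)
  from filterlim_compose[OF this assms] show ?thesis
    by (simp add: o_def)
qed

text \<open>Dominated convergence for the difference quotients. Since \<open>exp \<bar>\<phi>\<bar>\<close> is bounded by the
  four exponentials \<open>exp ((\<plusminus>1 \<plusminus> \<i>) * \<phi>)\<close>, the integrable functions at the shifted parameters
  \<open>z0 \<plusminus> 1 \<plusminus> \<i>\<close> dominate all quotients with increment of norm at most 1.\<close>

lemma has_field_derivative_integral_mult_exp:
  fixes g \<phi> :: "'x::euclidean_space \<Rightarrow> complex"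
  assumes int: "\<And>c. integrable lborel (\<lambda>x. g x * exp (c * \<phi> x))"
    and int_deriv: "\<And>c. integrable lborel (\<lambda>x. \<phi> x * (g x * exp (c * \<phi> x)))"
  shows "((\<lambda>z. \<integral>x. g x * exp (z * \<phi> x) \<partial>lborel) has_field_derivative
          (\<integral>x. \<phi> x * (g x * exp (z0 * \<phi> x)) \<partial>lborel)) (at z0)"
proof -
  define F where "F z = (\<integral>x. g x * exp (z * \<phi> x) \<partial>lborel)" for z
  define D where "D = (\<integral>x. \<phi> x * (g x * exp (z0 * \<phi> x)) \<partial>lborel)"
  define w where "w x = cmod (\<phi> x * (g x * exp ((z0 + (1 + \<i>)) * \<phi> x)))
     + cmod (\<phi> x * (g x * exp ((z0 + (1 - \<i>)) * \<phi> x)))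
     + cmod (\<phi> x * (g x * exp ((z0 + (- 1 + \<i>)) * \<phi> x)))
     + cmod (\<phi> x * (g x * exp ((z0 + (- 1 - \<i>)) * \<phi> x)))" for x
  have w_int: "integrable lborel w"
    unfolding w_def by (intro Bochner_Integration.integrable_add integrable_norm int_deriv)
  have quotient: "(F y - F z0) / (y - z0)
      = (\<integral>x. (g x * exp (y * \<phi> x) - g x * exp (z0 * \<phi> x)) / (y - z0) \<partial>lborel)" for y
    unfolding F_def by (simp add: integral_divide_zero integral_diff int)
  have "((\<lambda>y. (F y - F z0) / (y - z0)) \<longlongrightarrow> D) (at z0)"
  proof (subst tendsto_at_iff_sequentially, intro allI impI)
    fix X :: "nat \<Rightarrow> complex"
    assume X_ne: "\<forall>i. X i \<in> UNIV - {z0}" and X_lim: "X \<longlonglongrightarrow> z0"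
    define h where "h i = X i - z0" for i
    have h_ne: "h i \<noteq> 0" for i
      using X_ne by (auto simp: h_def)
    have h_lim: "h \<longlonglongrightarrow> 0"
      unfolding h_def using X_lim by (simp add: LIM_zero)
    then obtain N where N: "\<And>n. n \<ge> N \<Longrightarrow> cmod (h n) \<le> 1"
      by (metis (full_types) LIMSEQ_iff diff_zero less_imp_le zero_less_one)
    define s where "s i x = (g x * exp (X (i + N) * \<phi> x) - g x * exp (z0 * \<phi> x)) / (X (i + N) - z0)"
      for i x
    have s_eq: "s i x = g x * exp (z0 * \<phi> x) * ((exp (h (i + N) * \<phi> x) - 1) / h (i + N))" for i x
      by (simp add: s_def h_def field_simps flip: exp_add)
    have "(\<lambda>i. \<integral>x. s i x \<partial>lborel) \<longlonglongrightarrow> D"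
      unfolding D_def
    proof (rule integral_dominated_convergence[where w = w])
      show "(\<lambda>x. \<phi> x * (g x * exp (z0 * \<phi> x))) \<in> borel_measurable lborel"
        using int_deriv[of z0] by (rule borel_measurable_integrable)
      show "s i \<in> borel_measurable lborel" for i
        unfolding s_def using int
        by (intro borel_measurable_divide borel_measurable_diff borel_measurable_integrable) auto
      show "integrable lborel w"
        by (rule w_int)
      have h_at_0: "filterlim (\<lambda>i. h (i + N)) (at 0) sequentially"
        using h_ne by (intro filterlim_atI) (auto intro: LIMSEQ_ignore_initial_segment[OF h_lim])
      show "AE x in lborel. (\<lambda>i. s i x) \<longlonglongrightarrow> \<phi> x * (g x * exp (z0 * \<phi> x))"
      proof (intro AE_I2)
        fix x
        have "(\<lambda>i. g x * exp (z0 * \<phi> x) * ((exp (h (i + N) * \<phi> x) - 1) / h (i + N)))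
            \<longlonglongrightarrow> g x * exp (z0 * \<phi> x) * \<phi> x"
          by (intro tendsto_mult tendsto_const tendsto_exp_diff_quotient h_at_0)
        then show "(\<lambda>i. s i x) \<longlonglongrightarrow> \<phi> x * (g x * exp (z0 * \<phi> x))"
          by (simp add: s_eq mult_ac)
      qed
      show "AE x in lborel. norm (s i x) \<le> w x" for i
        unfolding s_eq w_def by (intro AE_I2 norm_scaled_exp_diff_quotient_le h_ne N) simp
    qed
    moreover have "(\<lambda>i. \<integral>x. s i x \<partial>lborel) = (\<lambda>i. ((\<lambda>y. (F y - F z0) / (y - z0)) \<circ> X) (i + N))"
      by (simp add: quotient s_def fun_eq_iff)
    ultimately show "((\<lambda>y. (F y - F z0) / (y - z0)) \<circ> X) \<longlonglongrightarrow> D"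
      using LIMSEQ_offset by metis
  qed
  then show ?thesis
    unfolding F_def[symmetric] D_def[symmetric] by (simp add: has_field_derivative_iff)
qed

section \<open>Integrals of derivatives along measure preserving flows\<close>

lemma integral_comp_measure_preserving:
  fixes f :: "'x::euclidean_space \<Rightarrow> 'b::{banach, second_countable_topology}"
  assumes "T \<in> borel_measurable borel" "distr lborel borel T = lborel" "f \<in> borel_measurable borel"
  shows "(\<integral>x. f (T x) \<partial>lborel) = integral\<^sup>L lborel f"
  using integral_distr[of T lborel borel f] assms by simp

lemma integrable_comp_measure_preserving:
  fixes f :: "'x::euclidean_space \<Rightarrow> 'b::{banach, second_countable_topology}"
  assumes "T \<in> borel_measurable borel" "distr lborel borel T = lborel" "integrable lborel f"
  shows "integrable lborel (\<lambda>x. f (T x))"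
  using integrable_distr_eq[of T lborel borel f] assms by simp

lemma borel_measurable_flow:
  fixes T :: "real \<Rightarrow> 'x::euclidean_space \<Rightarrow> 'x"
  assumes "continuous_on UNIV (\<lambda>p. T (fst p) (snd p))"
  shows "T s \<in> borel_measurable borel"
proof -
  have "continuous_on UNIV (T s)"
    using continuous_on_compose2[OF assms, where f = "\<lambda>M. (s, M)" and s = UNIV]
      continuous_on_Pair[OF continuous_on_const continuous_on_id]
    by auto
  then show ?thesis
    by (rule borel_measurable_continuous_onI)
qed

lemma integrable_flow_strip:
  fixes T :: "real \<Rightarrow> 'x::euclidean_space \<Rightarrow> 'x" and J :: "'x \<Rightarrow> complex"
  assumes T_lborel: "\<And>s. distr lborel borel (T s) = lborel"
    and T_cont: "continuous_on UNIV (\<lambda>p. T (fst p) (snd p))"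
    and J_int: "integrable lborel J"
  shows "integrable (lborel \<Otimes>\<^sub>M lborel) (\<lambda>p. indicator {0..1::real} (fst p) *\<^sub>R J (T (fst p) (snd p)))"
proof (rule pair_sigma_finite.Fubini_integrable)
  show "pair_sigma_finite (lborel :: real measure) (lborel :: 'x measure)"
    by (simp add: pair_sigma_finite_def sigma_finite_lborel)
  have J_meas: "J \<in> borel_measurable borel"
    using borel_measurable_integrable[OF J_int] by simp
  have "(\<lambda>p. J (T (fst p) (snd p))) \<in> borel_measurable borel"
    using borel_measurable_continuous_onI[OF T_cont] J_meas by (rule measurable_compose)
  moreover have "(\<lambda>p::real \<times> 'x. indicator {0..1::real} (fst p) :: real) \<in> borel_measurable borel"
  proof -
    have "{0..1::real} \<times> (UNIV :: 'x set) \<in> sets borel"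
      by (intro borel_closed closed_Times) auto
    moreover have "(\<lambda>p::real \<times> 'x. indicator {0..1::real} (fst p) :: real) = indicator ({0..1} \<times> UNIV)"
      by (auto simp: indicator_def fun_eq_iff)
    ultimately show ?thesis
      by simp
  qed
  ultimately have "(\<lambda>p. indicator {0..1::real} (fst p) *\<^sub>R J (T (fst p) (snd p))) \<in> borel_measurable borel"
    by (intro borel_measurable_scaleR)
  then show "(\<lambda>p. indicator {0..1::real} (fst p) *\<^sub>R J (T (fst p) (snd p)))
      \<in> borel_measurable (lborel \<Otimes>\<^sub>M lborel)"
    by (simp add: lborel_prod)
  have "(\<integral>M. norm (J (T s M)) \<partial>lborel) = (\<integral>M. norm (J M) \<partial>lborel)" for s
    using integral_comp_measure_preserving[OF borel_measurable_flow[OF T_cont] T_lborel, of "\<lambda>M. norm (J M)" s] J_meas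
    by simp
  then show "integrable lborel (\<lambda>s. \<integral>M. norm (indicator {0..1::real} (fst (s, M)) *\<^sub>R J (T (fst (s, M)) (snd (s, M)))) \<partial>lborel)"
    by simp
  show "AE s in lborel. integrable lborel (\<lambda>M. indicator {0..1::real} (fst (s, M)) *\<^sub>R J (T (fst (s, M)) (snd (s, M))))"
    using integrable_comp_measure_preserving[OF borel_measurable_flow[OF T_cont] T_lborel J_int] by simp
qed

text \<open>By the fundamental theorem of calculus \<open>\<integral>\<^sub>0\<^sup>1 J (T s M) ds = I (T 1 M) - I M\<close>. Integrating over
  \<open>M\<close> and exchanging the integrals by Fubini, the left side becomes \<open>\<integral> J\<close> and the right side
  vanishes, since every \<open>T s\<close> preserves Lebesgue measure.\<close>

lemma integral_flow_derivative_eq_0: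
  fixes T :: "real \<Rightarrow> 'x::euclidean_space \<Rightarrow> 'x" and I J :: "'x \<Rightarrow> complex"
  assumes T_lborel: "\<And>s. distr lborel borel (T s) = lborel"
    and T_cont: "continuous_on UNIV (\<lambda>p. T (fst p) (snd p))"
    and T_0: "\<And>M. T 0 M = M"
    and I_int: "integrable lborel I" and J_int: "integrable lborel J"
    and deriv: "\<And>M s. ((\<lambda>s. I (T s M)) has_vector_derivative J (T s M)) (at s)"
    and J_cont: "\<And>M. continuous_on UNIV (\<lambda>s. J (T s M))"
  shows "integral\<^sup>L lborel J = 0"
proof -
  note T_meas = borel_measurable_flow[OF T_cont]
  define f where "f s M = indicator {0..1::real} s *\<^sub>R J (T s M)" for s M
  have FTC: "(\<integral>s. f s M \<partial>lborel) = I (T 1 M) - I M" for M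
  proof -
    have "interval_lebesgue_integral lborel (ereal 0) (ereal 1) (\<lambda>s. J (T s M)) = I (T 1 M) - I (T 0 M)"
    proof (rule interval_integral_FTC_finite)
      show "continuous_on {min 0 1..max 0 1} (\<lambda>s. J (T s M))"
        using J_cont[of M] by (rule continuous_on_subset) auto
      show "((\<lambda>s. I (T s M)) has_vector_derivative J (T x M)) (at x within {min 0 1..max 0 1})" for x
        using deriv[of M x] by (rule has_vector_derivative_at_within)
    qed
    then show ?thesis
      by (simp add: f_def interval_integral_Icc set_lebesgue_integral_def T_0)
  qed
  have "(\<integral>M. (\<integral>s. f s M \<partial>lborel) \<partial>lborel) = (\<integral>s. (\<integral>M. f s M \<partial>lborel) \<partial>lborel)"
    using pair_sigma_finite.Fubini_integral[of lborel lborel f] integrable_flow_strip[OF T_lborel T_cont J_int]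
    by (simp add: pair_sigma_finite_def sigma_finite_lborel f_def case_prod_beta')
  moreover have "(\<integral>M. (\<integral>s. f s M \<partial>lborel) \<partial>lborel) = 0"
    using I_int T_meas T_lborel
    by (simp add: FTC Bochner_Integration.integral_diff integrable_comp_measure_preserving
        integral_comp_measure_preserving borel_measurable_integrable)
  moreover have "(\<integral>s. (\<integral>M. f s M \<partial>lborel) \<partial>lborel) = integral\<^sup>L lborel J"
    using J_int T_meas T_lborel by (simp add: f_def integral_comp_measure_preserving borel_measurable_integrable)
  ultimately show ?thesis
    by simp
qed

section \<open>Row rotations of matrices\<close>

definition row_mix :: "('r \<Rightarrow> complex) \<Rightarrow> ('r \<Rightarrow> 'r) \<Rightarrow> complex^'c^'r \<Rightarrow> complex^'c^'r" where
  "row_mix v \<sigma> N = (\<chi> i j. v i * N$(\<sigma> i)$j)"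

definition row_scale :: "('r \<Rightarrow> real) \<Rightarrow> complex^'c^'r \<Rightarrow> complex^'c^'r" where
  "row_scale w N = (\<chi> i j. complex_of_real (w i) * N$i$j)"

text \<open>For \<open>G = row_mix v \<sigma>\<close> and \<open>P = row_scale w\<close> with \<open>G P = G\<close> and \<open>G\<^sup>2 = - P\<close> (the hypotheses of
  \<open>has_vector_derivative_row_rotation\<close>), this is \<open>exp (s G) = 1 + (cos s - 1) P + sin s G\<close>.\<close>

definition row_rotation :: "('r \<Rightarrow> complex) \<Rightarrow> ('r \<Rightarrow> 'r) \<Rightarrow> ('r \<Rightarrow> real) \<Rightarrow> real
    \<Rightarrow> complex^'c^'r \<Rightarrow> complex^'c^'r" where
  "row_rotation v \<sigma> w s N = N + (cos s - 1) *\<^sub>R row_scale w N + sin s *\<^sub>R row_mix v \<sigma> N"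

lemma row_mix_nth [simp]: "row_mix v \<sigma> N $ i $ j = v i * N$(\<sigma> i)$j"
  by (simp add: row_mix_def)

lemma row_scale_nth [simp]: "row_scale w N $ i $ j = complex_of_real (w i) * N$i$j"
  by (simp add: row_scale_def)

lemma row_rotation_nth:
  "row_rotation v \<sigma> w s N $ i $ j = N$i$j + complex_of_real (cos s - 1) * (complex_of_real (w i) * N$i$j)
     + complex_of_real (sin s) * (v i * N$(\<sigma> i)$j)"
  by (simp add: row_rotation_def scaleR_conv_of_real[where 'a = complex])

lemma row_rotation_0 [simp]: "row_rotation v \<sigma> w 0 N = N"
  by (simp add: row_rotation_def)

lemma linear_row_mix: "linear (row_mix v \<sigma>)"
  by (intro linearI) (simp_all add: vec_eq_iff algebra_simps scaleR_conv_of_real[where 'a = complex])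

lemma linear_row_scale: "linear (row_scale w)"
  by (intro linearI) (simp_all add: vec_eq_iff algebra_simps scaleR_conv_of_real[where 'a = complex])

lemma linear_row_rotation: "linear (row_rotation v \<sigma> w s)"
  unfolding row_rotation_def
  by (intro linear_compose_add linear_id[unfolded id_def] linear_compose_scale_right
      linear_row_mix linear_row_scale)

lemma continuous_on_row_rotation:
  "continuous_on UNIV (\<lambda>p::real \<times> (complex^'c::finite^'r::finite). row_rotation v \<sigma> w (fst p) (snd p))"
  unfolding row_rotation_def
  by (intro continuous_intros
      continuous_on_compose2[OF linear_continuous_on[OF linear_row_scale[unfolded linear_conv_bounded_linear]]]
      continuous_on_compose2[OF linear_continuous_on[OF linear_row_mix[unfolded linear_conv_bounded_linear]]]) auto

lemma has_vector_derivative_row_rotation: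
  assumes mix_scale: "\<And>i. v i * complex_of_real (w (\<sigma> i)) = v i"
    and mix_square: "\<And>i. v i * v (\<sigma> i) = - complex_of_real (w i)"
    and \<sigma>_involution: "\<And>i. \<sigma> (\<sigma> i) = i"
  shows "((\<lambda>s. row_rotation v \<sigma> w s M) has_vector_derivative row_mix v \<sigma> (row_rotation v \<sigma> w s M)) (at s)"
proof -
  have "((\<lambda>s. row_rotation v \<sigma> w s M) has_vector_derivative
      (- sin s) *\<^sub>R row_scale w M + cos s *\<^sub>R row_mix v \<sigma> M) (at s)"
    unfolding row_rotation_def by (auto intro!: derivative_eq_intros)
  moreover have "(- sin s) *\<^sub>R row_scale w M + cos s *\<^sub>R row_mix v \<sigma> M = row_mix v \<sigma> (row_rotation v \<sigma> w s M)"
    unfolding vec_eq_iff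
  proof (intro allI)
    fix i j
    have "row_mix v \<sigma> (row_rotation v \<sigma> w s M) $ i $ j = v i * M$(\<sigma> i)$j
        + complex_of_real (cos s - 1) * (v i * complex_of_real (w (\<sigma> i))) * M$(\<sigma> i)$j
        + complex_of_real (sin s) * (v i * v (\<sigma> i)) * M$(\<sigma> (\<sigma> i))$j"
      by (simp add: row_rotation_nth algebra_simps)
    also have "\<dots> = ((- sin s) *\<^sub>R row_scale w M + cos s *\<^sub>R row_mix v \<sigma> M) $ i $ j"
      by (simp add: mix_scale mix_square \<sigma>_involution scaleR_conv_of_real[where 'a = complex] algebra_simps)
    finally show "((- sin s) *\<^sub>R row_scale w M + cos s *\<^sub>R row_mix v \<sigma> M) $ i $ j
        = row_mix v \<sigma> (row_rotation v \<sigma> w s M) $ i $ j" ..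
  qed
  ultimately show ?thesis
    by simp
qed

definition unitary_map :: "(complex^'c^'r \<Rightarrow> complex^'c^'r) \<Rightarrow> bool" where
  "unitary_map f \<longleftrightarrow> linear f \<and> (\<forall>V W. adj (f V) ** f W = adj V ** W)"

lemma adj_matrix_mult_nth: "(adj V ** W) $ a $ b = (\<Sum>k\<in>UNIV. cnj (V$k$a) * W$k$b)"
  by (simp add: adj_def matrix_matrix_mult_def)

lemma inner_eq_Re_trace_adj_mult: "V \<bullet> W = Re (trace (adj V ** W))"
proof -
  have "V \<bullet> W = (\<Sum>i\<in>UNIV. \<Sum>j\<in>UNIV. Re (cnj (V$i$j) * W$i$j))"
    by (simp add: inner_vec_def inner_complex_def)
  also have "\<dots> = (\<Sum>j\<in>UNIV. \<Sum>i\<in>UNIV. Re (cnj (V$i$j) * W$i$j))"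
    by (rule sum.swap)
  finally show ?thesis
    by (simp add: trace_def adj_matrix_mult_nth Re_sum)
qed

lemma unitary_map_imp_orthogonal_transformation:
  "unitary_map f \<Longrightarrow> orthogonal_transformation f"
  by (simp add: unitary_map_def orthogonal_transformation_def inner_eq_Re_trace_adj_mult)

lemma distr_lborel_unitary_map:
  fixes f :: "complex^'c::finite^'r::finite \<Rightarrow> complex^'c^'r"
  assumes "unitary_map f"
  shows "distr lborel borel f = lborel"
proof -
  have "DIM(complex^'c^'r) = CARD(('r \<times> 'c) bit0)"
    by simp
  then show ?thesis
    using distr_lborel_orthogonal_transformation unitary_map_imp_orthogonal_transformation assms
    by blast
qed

lemma sum_remove_two:
  fixes f :: "'r::finite \<Rightarrow> 'b::comm_monoid_add"
  assumes "p \<noteq> q"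
  shows "(\<Sum>k\<in>UNIV. f k) = f p + f q + (\<Sum>k\<in>UNIV - {p, q}. f k)"
proof -
  have "(\<Sum>k\<in>UNIV. f k) = f p + (\<Sum>k\<in>UNIV - {p}. f k)"
    by (simp add: sum.remove[of UNIV p])
  also have "(\<Sum>k\<in>UNIV - {p}. f k) = f q + (\<Sum>k\<in>UNIV - {p} - {q}. f k)"
    using assms by (intro sum.remove) auto
  finally show ?thesis
    by (simp add: add.assoc Diff_insert2[symmetric] insert_commute)
qed

lemma unitary_map_mix_two_rows:
  fixes f :: "complex^'c::finite^'r::finite \<Rightarrow> complex^'c^'r"
  assumes "p \<noteq> q" and "linear f"
    and f_nth: "\<And>N k j. f N $ k $ j = (if k = p then \<alpha> * N$p$j + \<beta> * N$q$j
        else if k = q then \<gamma> * N$p$j + \<delta> * N$q$j else N$k$j)"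
    and col1: "cnj \<alpha> * \<alpha> + cnj \<gamma> * \<gamma> = 1" and col2: "cnj \<beta> * \<beta> + cnj \<delta> * \<delta> = 1"
    and col12: "cnj \<alpha> * \<beta> + cnj \<gamma> * \<delta> = 0"
  shows "unitary_map f"
  unfolding unitary_map_def
proof (intro conjI allI \<open>linear f\<close>)
  fix V W :: "complex^'c^'r"
  have col21: "cnj \<beta> * \<alpha> + cnj \<delta> * \<gamma> = 0"
    using arg_cong[OF col12, of cnj] by (simp add: mult.commute)
  have two_rows: "cnj (\<alpha> * V$p$a + \<beta> * V$q$a) * (\<alpha> * W$p$b + \<beta> * W$q$b)
      + cnj (\<gamma> * V$p$a + \<delta> * V$q$a) * (\<gamma> * W$p$b + \<delta> * W$q$b)
    = cnj (V$p$a) * W$p$b * (cnj \<alpha> * \<alpha> + cnj \<gamma> * \<gamma>) + cnj (V$q$a) * W$q$b * (cnj \<beta> * \<beta> + cnj \<delta> * \<delta>)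
      + cnj (V$p$a) * W$q$b * (cnj \<alpha> * \<beta> + cnj \<gamma> * \<delta>) + cnj (V$q$a) * W$p$b * (cnj \<beta> * \<alpha> + cnj \<delta> * \<gamma>)"
    for a b
    by (simp add: algebra_simps)
  have other_rows: "(\<Sum>k\<in>UNIV - {p, q}. cnj (f V $ k $ a) * f W $ k $ b)
      = (\<Sum>k\<in>UNIV - {p, q}. cnj (V$k$a) * W$k$b)" for a b
    by (rule sum.cong) (auto simp: f_nth)
  show "adj (f V) ** f W = adj V ** W"
    unfolding vec_eq_iff adj_matrix_mult_nth
    using \<open>p \<noteq> q\<close>
    by (auto simp only: sum_remove_two[OF \<open>p \<noteq> q\<close>] other_rows)
      (simp del: complex_cnj_add complex_cnj_mult add: f_nth two_rows col1 col2 col12 col21)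
qed

lemma unitary_map_scale_row:
  fixes f :: "complex^'c::finite^'r::finite \<Rightarrow> complex^'c^'r"
  assumes "linear f"
    and f_nth: "\<And>N k j. f N $ k $ j = (if k = p then \<alpha> * N$p$j else N$k$j)"
    and "cnj \<alpha> * \<alpha> = 1"
  shows "unitary_map f"
  unfolding unitary_map_def
proof (intro conjI allI \<open>linear f\<close>)
  fix V W :: "complex^'c^'r"
  have "cnj (\<alpha> * V$p$a) * (\<alpha> * W$p$b) = cnj (V$p$a) * W$p$b" for a b
    using \<open>cnj \<alpha> * \<alpha> = 1\<close> by (simp add: algebra_simps)
  then show "adj (f V) ** f W = adj V ** W"
    unfolding vec_eq_iff adj_matrix_mult_nth f_nth
    by (subst (1 2) sum.remove[of UNIV p]) auto
qed

lemma cos_sin_squared_add_complex: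
  "complex_of_real (cos s) * complex_of_real (cos s) + complex_of_real (sin s) * complex_of_real (sin s) = 1"
  by (metis sin_cos_squared_add3 of_real_add of_real_mult of_real_1)

lemma unitary_map_row_rotation_real:
  assumes "p \<noteq> q"
  shows "unitary_map (row_rotation ((\<lambda>_. 0)(p := -1, q := 1)) (id(p := q, q := p)) ((\<lambda>_. 0)(p := 1, q := 1)) s
           :: complex^'c::finite^'r::finite \<Rightarrow> _)"
proof (rule unitary_map_mix_two_rows[OF \<open>p \<noteq> q\<close> linear_row_rotation])
  define c t where "c = complex_of_real (cos s)" and "t = complex_of_real (sin s)"
  have cs: "c * c + t * t = 1"
    unfolding c_def t_def by (rule cos_sin_squared_add_complex)
  show "row_rotation ((\<lambda>_. 0)(p := -1, q := 1)) (id(p := q, q := p)) ((\<lambda>_. 0)(p := 1, q := 1)) s N $ k $ j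
      = (if k = p then c * N$p$j + (- t) * N$q$j else if k = q then t * N$p$j + c * N$q$j else N$k$j)"
    for N :: "complex^'c^'r" and k j
    using \<open>p \<noteq> q\<close> by (simp add: row_rotation_nth c_def t_def algebra_simps)
  show "cnj c * c + cnj t * t = 1" "cnj (- t) * (- t) + cnj c * c = 1" "cnj c * (- t) + cnj t * c = 0"
    using cs by (simp_all add: c_def t_def algebra_simps)
qed

lemma unitary_map_row_rotation_imag:
  assumes "p \<noteq> q"
  shows "unitary_map (row_rotation ((\<lambda>_. 0)(p := \<i>, q := \<i>)) (id(p := q, q := p)) ((\<lambda>_. 0)(p := 1, q := 1)) s
           :: complex^'c::finite^'r::finite \<Rightarrow> _)"
proof (rule unitary_map_mix_two_rows[OF \<open>p \<noteq> q\<close> linear_row_rotation])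
  define c t where "c = complex_of_real (cos s)" and "t = complex_of_real (sin s)"
  have cs: "c * c + t * t = 1"
    unfolding c_def t_def by (rule cos_sin_squared_add_complex)
  have real: "cnj c = c" "cnj t = t"
    by (simp_all add: c_def t_def)
  show "row_rotation ((\<lambda>_. 0)(p := \<i>, q := \<i>)) (id(p := q, q := p)) ((\<lambda>_. 0)(p := 1, q := 1)) s N $ k $ j
      = (if k = p then c * N$p$j + (\<i> * t) * N$q$j else if k = q then (\<i> * t) * N$p$j + c * N$q$j else N$k$j)"
    for N :: "complex^'c^'r" and k j
    using \<open>p \<noteq> q\<close> by (simp add: row_rotation_nth c_def t_def algebra_simps)
  show "cnj c * c + cnj (\<i> * t) * (\<i> * t) = 1" "cnj (\<i> * t) * (\<i> * t) + cnj c * c = 1"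
    "cnj c * (\<i> * t) + cnj (\<i> * t) * c = 0"
    using cs by (simp_all add: real algebra_simps)
qed

lemma unitary_map_row_rotation_phase:
  "unitary_map (row_rotation ((\<lambda>_. 0)(p := \<i>)) id ((\<lambda>_. 0)(p := 1)) s
     :: complex^'c::finite^'r::finite \<Rightarrow> _)"
proof (rule unitary_map_scale_row[OF linear_row_rotation])
  define c t where "c = complex_of_real (cos s)" and "t = complex_of_real (sin s)"
  have cs: "c * c + t * t = 1"
    unfolding c_def t_def by (rule cos_sin_squared_add_complex)
  show "row_rotation ((\<lambda>_. 0)(p := \<i>)) id ((\<lambda>_. 0)(p := 1)) s N $ k $ j
      = (if k = p then (c + \<i> * t) * N$p$j else N$k$j)"
    for N :: "complex^'c^'r" and k j
    by (simp add: row_rotation_nth c_def t_def algebra_simps)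
  show "cnj (c + \<i> * t) * (c + \<i> * t) = 1"
    using cs by (simp add: c_def t_def algebra_simps)
qed

section \<open>The Ward identity for row rotations\<close>

definition kinetic :: "('r \<Rightarrow> 'c \<Rightarrow> real) \<Rightarrow> complex^'c^'r \<Rightarrow> complex" where
  "kinetic E N = (\<Sum>i\<in>UNIV. \<Sum>j\<in>UNIV. cnj (N$i$j) * complex_of_real (E i j) * N$i$j)"

definition potential :: "(nat \<Rightarrow> real) \<Rightarrow> complex^'c^'r \<Rightarrow> complex" where
  "potential a N = (\<Sum>q. pot_term a N q)"

definition gaussian_action :: "('r \<Rightarrow> 'c \<Rightarrow> real) \<Rightarrow> complex^'c^'r \<Rightarrow> complex^'c^'r \<Rightarrow> complex^'c^'r
    \<Rightarrow> complex" where
  "gaussian_action E L K N = - kinetic E N + mdot K N + mdot (mconj N) L"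

definition gaussian_action_deriv_entry :: "('r \<Rightarrow> 'c \<Rightarrow> real) \<Rightarrow> complex^'c^'r \<Rightarrow> complex^'c^'r
    \<Rightarrow> complex^'c^'r \<Rightarrow> complex^'c^'r \<Rightarrow> 'r \<Rightarrow> 'c \<Rightarrow> complex" where
  "gaussian_action_deriv_entry E L K N H i j =
     - (cnj (H$i$j) * complex_of_real (E i j) * N$i$j + cnj (N$i$j) * complex_of_real (E i j) * H$i$j)
     + K$i$j * H$i$j + cnj (H$i$j) * L$i$j"

definition gaussian_action_deriv :: "('r \<Rightarrow> 'c \<Rightarrow> real) \<Rightarrow> complex^'c^'r \<Rightarrow> complex^'c^'r
    \<Rightarrow> complex^'c^'r \<Rightarrow> complex^'c^'r \<Rightarrow> complex" where
  "gaussian_action_deriv E L K N H = (\<Sum>i\<in>UNIV. \<Sum>j\<in>UNIV. gaussian_action_deriv_entry E L K N H i j)"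

lemma integrand_eq_exp_gaussian_action:
  "integrand lr lc m R a L K N = exp (gaussian_action (Ek lr lc m R) L K N - potential a N)"
  unfolding integrand_def Hfun_def gaussian_action_def kinetic_def potential_def
  by (simp add: algebra_simps)

text \<open>The potential depends on \<open>M\<close> only through \<open>adj M ** M\<close>.\<close>

lemma potential_unitary_map: "unitary_map f \<Longrightarrow> potential a (f M) = potential a M"
  unfolding unitary_map_def potential_def pot_term_def by metis

lemma has_derivative_vec_nth_nth [derivative_intros]:
  "(f has_derivative f') F \<Longrightarrow>
    ((\<lambda>x. (f x :: 'a::real_normed_vector^'c^'r) $ i $ j) has_derivative (\<lambda>h. f' h $ i $ j)) F"
  using bounded_linear.has_derivative[OF bounded_linear_compose[OF bounded_linear_vec_nth bounded_linear_vec_nth]]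
  by blast

lemma has_derivative_gaussian_action:
  "(gaussian_action E L K has_derivative gaussian_action_deriv E L K N) (at N)"
proof -
  have "(gaussian_action E L K has_derivative (\<lambda>H.
       - (\<Sum>i\<in>UNIV. \<Sum>j\<in>UNIV. cnj (H$i$j) * complex_of_real (E i j) * N$i$j
            + cnj (N$i$j) * complex_of_real (E i j) * H$i$j)
       + (\<Sum>i\<in>UNIV. \<Sum>j\<in>UNIV. K$i$j * H$i$j) + (\<Sum>i\<in>UNIV. \<Sum>j\<in>UNIV. cnj (H$i$j) * L$i$j))) (at N)"
    unfolding gaussian_action_def kinetic_def mdot_def mconj_def
    by (auto intro!: derivative_eq_intros simp: algebra_simps)
  moreover have "gaussian_action_deriv E L K N = (\<lambda>H.
       - (\<Sum>i\<in>UNIV. \<Sum>j\<in>UNIV. cnj (H$i$j) * complex_of_real (E i j) * N$i$j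
            + cnj (N$i$j) * complex_of_real (E i j) * H$i$j)
       + (\<Sum>i\<in>UNIV. \<Sum>j\<in>UNIV. K$i$j * H$i$j) + (\<Sum>i\<in>UNIV. \<Sum>j\<in>UNIV. cnj (H$i$j) * L$i$j))"
    unfolding gaussian_action_deriv_def gaussian_action_deriv_entry_def fun_eq_iff
    by (simp only: sum.distrib sum_negf) simp
  ultimately show ?thesis
    by simp
qed

lemma gaussian_action_deriv_row_mix_supported:
  fixes S :: "'r::finite set"
  assumes "\<And>i. i \<notin> S \<Longrightarrow> v i = 0"
  shows "gaussian_action_deriv E L K N (row_mix v \<sigma> N)
    = (\<Sum>i\<in>S. \<Sum>j\<in>UNIV. gaussian_action_deriv_entry E L K N (row_mix v \<sigma> N) i j)"
  unfolding gaussian_action_deriv_def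
  by (rule sum.mono_neutral_right) (auto simp: gaussian_action_deriv_entry_def assms)

lemma integrable_gaussian_action_deriv_row_mix:
  fixes lr :: "'r::finite \<Rightarrow> real" and lc :: "'c::finite \<Rightarrow> real"
  assumes M_int: "\<And>i j. integrable lborel (\<lambda>M. M$i$j * integrand lr lc m R a L K M)"
    and cnj_M_int: "\<And>i j. integrable lborel (\<lambda>M. cnj (M$i$j) * integrand lr lc m R a L K M)"
    and cnj_M_M_int: "\<And>i j i' j'. integrable lborel (\<lambda>M. cnj (M$i$j) * M$i'$j' * integrand lr lc m R a L K M)"
  shows "integrable lborel
    (\<lambda>N. integrand lr lc m R a L K N * gaussian_action_deriv (Ek lr lc m R) L K N (row_mix v \<sigma> N))"
proof -
  define I where "I = integrand lr lc m R a L K"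
  define E where "E = Ek lr lc m R"
  have "I N * gaussian_action_deriv E L K N (row_mix v \<sigma> N) = (\<Sum>i\<in>UNIV. \<Sum>j\<in>UNIV.
      - (cnj (v i) * complex_of_real (E i j)) * (cnj (N$\<sigma> i$j) * N$i$j * I N)
      - (complex_of_real (E i j) * v i) * (cnj (N$i$j) * N$\<sigma> i$j * I N)
      + (K$i$j * v i) * (N$\<sigma> i$j * I N) + (cnj (v i) * L$i$j) * (cnj (N$\<sigma> i$j) * I N))" for N
    unfolding gaussian_action_deriv_def sum_distrib_left
    by (intro sum.cong refl) (simp add: gaussian_action_deriv_entry_def algebra_simps)
  moreover have "integrable lborel (\<lambda>N. \<Sum>i\<in>UNIV. \<Sum>j\<in>UNIV.
      - (cnj (v i) * complex_of_real (E i j)) * (cnj (N$\<sigma> i$j) * N$i$j * I N)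
      - (complex_of_real (E i j) * v i) * (cnj (N$i$j) * N$\<sigma> i$j * I N)
      + (K$i$j * v i) * (N$\<sigma> i$j * I N) + (cnj (v i) * L$i$j) * (cnj (N$\<sigma> i$j) * I N))"
    unfolding I_def
    by (intro Bochner_Integration.integrable_sum Bochner_Integration.integrable_add
        Bochner_Integration.integrable_diff integrable_mult_right M_int cnj_M_int cnj_M_M_int)
  ultimately show ?thesis
    by (simp add: I_def E_def)
qed

text \<open>The row rotations preserve Lebesgue measure and the potential, so along them the integrand
  changes only through the Gaussian action.\<close>

lemma integral_gaussian_action_deriv_row_mix_eq_0:
  fixes v :: "'r::finite \<Rightarrow> complex" and lr :: "'r \<Rightarrow> real" and lc :: "'c::finite \<Rightarrow> real"
  assumes mix_scale: "\<And>i. v i * complex_of_real (w (\<sigma> i)) = v i"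
    and mix_square: "\<And>i. v i * v (\<sigma> i) = - complex_of_real (w i)"
    and \<sigma>_involution: "\<And>i. \<sigma> (\<sigma> i) = i"
    and unitary: "\<And>s. unitary_map (row_rotation v \<sigma> w s :: complex^'c^'r \<Rightarrow> complex^'c^'r)"
    and I_int: "integrable lborel (integrand lr lc m R a L K)"
    and J_int: "integrable lborel
      (\<lambda>N. integrand lr lc m R a L K N * gaussian_action_deriv (Ek lr lc m R) L K N (row_mix v \<sigma> N))"
  shows "(\<integral>N. integrand lr lc m R a L K N
      * gaussian_action_deriv (Ek lr lc m R) L K N (row_mix v \<sigma> N) \<partial>lborel) = 0"
proof -
  define E where "E = Ek lr lc m R"
  define I where "I = integrand lr lc m R a L K"
  define J where "J N = I N * gaussian_action_deriv E L K N (row_mix v \<sigma> N)" for N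
  define T where "T = (row_rotation v \<sigma> w :: real \<Rightarrow> complex^'c^'r \<Rightarrow> complex^'c^'r)"
  have I_T: "I (T s M) = exp (gaussian_action E L K (T s M) - potential a M)" for s M
    by (simp add: I_def E_def T_def integrand_eq_exp_gaussian_action potential_unitary_map[OF unitary])
  have deriv: "((\<lambda>s. I (T s M)) has_vector_derivative J (T s M)) (at s)" for M s
  proof -
    have "((\<lambda>s. gaussian_action E L K (T s M)) has_vector_derivative
        gaussian_action_deriv E L K (T s M) (row_mix v \<sigma> (T s M))) (at s)"
      using vector_derivative_diff_chain_within[OF
          has_vector_derivative_row_rotation[where v = v and \<sigma> = \<sigma> and w = w, OF mix_scale mix_square \<sigma>_involution]
          has_derivative_subset[OF has_derivative_gaussian_action subset_UNIV]]
      by (simp add: o_def T_def)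
    then have "((\<lambda>s. gaussian_action E L K (T s M) - potential a M) has_vector_derivative
        gaussian_action_deriv E L K (T s M) (row_mix v \<sigma> (T s M))) (at s)"
      using has_vector_derivative_diff[OF _ has_vector_derivative_const] by fastforce
    from field_vector_diff_chain_at[OF this DERIV_exp]
    show ?thesis
      by (simp add: I_T J_def o_def mult.commute)
  qed
  have "integral\<^sup>L lborel J = 0"
  proof (rule integral_flow_derivative_eq_0[where T = T and I = I])
    show "distr lborel borel (T s) = lborel" for s
      unfolding T_def by (rule distr_lborel_unitary_map[OF unitary])
    show "continuous_on UNIV (\<lambda>p. T (fst p) (snd p))"
      unfolding T_def by (rule continuous_on_row_rotation)
    show "T 0 M = M" for M
      by (simp add: T_def)
    show "integrable lborel I" "integrable lborel J"
      using I_int J_int by (simp_all add: I_def J_def[abs_def] E_def)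
    show "((\<lambda>s. I (T s M)) has_vector_derivative J (T s M)) (at s)" for M s
      by (rule deriv)
    show "continuous_on UNIV (\<lambda>s. J (T s M))" for M
    proof -
      have "continuous_on UNIV (\<lambda>s. I (T s M))"
        using deriv[of M] by (intro continuous_at_imp_continuous_on ballI has_vector_derivative_continuous) blast
      moreover have "continuous_on UNIV (\<lambda>s. T s M)"
        unfolding T_def row_rotation_def by (intro continuous_intros)
      ultimately show ?thesis
        unfolding J_def gaussian_action_deriv_def gaussian_action_deriv_entry_def row_mix_nth
        by (intro continuous_intros)
    qed
  qed
  then show ?thesis
    by (simp add: J_def[abs_def] I_def E_def)
qed

section \<open>Derivatives of the partition function\<close>

lemma mupd_nth: "mupd K i j z $ a $ b = (if a = i \<and> b = j then z else K$a$b)"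
  by (simp add: mupd_def)

lemma mupd_same [simp]: "mupd K i j (K$i$j) = K"
  by (simp add: vec_eq_iff mupd_nth)

lemma sum_sum_delta:
  fixes f :: "'r::finite \<Rightarrow> 'c::finite \<Rightarrow> 'a::comm_monoid_add"
  shows "(\<Sum>a\<in>UNIV. \<Sum>b\<in>UNIV. if a = i \<and> b = j then f a b else 0) = f i j"
proof -
  have "(\<Sum>a\<in>UNIV. \<Sum>b\<in>UNIV. if a = i \<and> b = j then f a b else 0)
      = (\<Sum>a\<in>UNIV. if a = i then (\<Sum>b\<in>UNIV. if b = j then f a b else 0) else 0)"
    by (intro sum.cong refl) auto
  then show ?thesis
    by simp
qed

lemma mdot_mupd_left: "mdot (mupd K i j z) M = mdot (mupd K i j 0) M + z * M$i$j"
proof -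
  have "mdot (mupd K i j z) M = (\<Sum>a\<in>UNIV. \<Sum>b\<in>UNIV.
      mupd K i j 0 $ a $ b * M$a$b + (if a = i \<and> b = j then z * M$a$b else 0))"
    unfolding mdot_def by (intro sum.cong refl) (auto simp: mupd_nth)
  then show ?thesis
    by (simp add: sum.distrib mdot_def sum_sum_delta[where f = "\<lambda>a b. z * M$a$b"])
qed

lemma mdot_mupd_right: "mdot A (mupd L i j z) = mdot A (mupd L i j 0) + z * A$i$j"
proof -
  have "mdot A (mupd L i j z) = (\<Sum>a\<in>UNIV. \<Sum>b\<in>UNIV.
      A$a$b * mupd L i j 0 $ a $ b + (if a = i \<and> b = j then z * A$a$b else 0))"
    unfolding mdot_def by (intro sum.cong refl) (auto simp: mupd_nth)
  then show ?thesis
    by (simp add: sum.distrib mdot_def sum_sum_delta[where f = "\<lambda>a b. z * A$a$b"])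
qed

lemma mconj_nth [simp]: "mconj M $ i $ j = cnj (M$i$j)"
  by (simp add: mconj_def)

lemma integrand_mupd_right:
  "integrand lr lc m R a L (mupd K i j z) M = integrand lr lc m R a L (mupd K i j 0) M * exp (z * M$i$j)"
  unfolding integrand_def by (simp add: mdot_mupd_left[of K i j z] algebra_simps flip: exp_add)

lemma integrand_mupd_left:
  "integrand lr lc m R a (mupd L i j z) K M = integrand lr lc m R a (mupd L i j 0) K M * exp (z * cnj (M$i$j))"
  unfolding integrand_def by (simp add: mdot_mupd_right[of "mconj M" L i j z] algebra_simps flip: exp_add)

lemma dK_integral_integrand:
  fixes h :: "complex^'c::finite^'r::finite \<Rightarrow> complex"
  assumes "\<And>K. integrable lborel (\<lambda>M. h M * integrand lr lc m R a L K M)"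
    and "\<And>K. integrable lborel (\<lambda>M. M$i$j * (h M * integrand lr lc m R a L K M))"
  shows "dK (\<lambda>L K. \<integral>M. h M * integrand lr lc m R a L K M \<partial>lborel) i j L K
    = (\<integral>M. M$i$j * (h M * integrand lr lc m R a L K M) \<partial>lborel)"
proof -
  define g where "g M = h M * integrand lr lc m R a L (mupd K i j 0) M" for M
  have split: "h M * integrand lr lc m R a L (mupd K i j z) M = g M * exp (z * M$i$j)" for z M
    by (simp add: g_def integrand_mupd_right[of _ _ _ _ _ L K i j z])
  have "((\<lambda>z. \<integral>M. g M * exp (z * M$i$j) \<partial>lborel) has_field_derivative
      (\<integral>M. M$i$j * (g M * exp (K$i$j * M$i$j)) \<partial>lborel)) (at (K$i$j))"
    by (rule has_field_derivative_integral_mult_exp) (simp_all add: assms flip: split)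
  from DERIV_imp_deriv[OF this] show ?thesis
    by (simp add: dK_def flip: split)
qed

lemma dL_integral_integrand:
  fixes h :: "complex^'c::finite^'r::finite \<Rightarrow> complex"
  assumes "\<And>L. integrable lborel (\<lambda>M. h M * integrand lr lc m R a L K M)"
    and "\<And>L. integrable lborel (\<lambda>M. cnj (M$i$j) * (h M * integrand lr lc m R a L K M))"
  shows "dL (\<lambda>L K. \<integral>M. h M * integrand lr lc m R a L K M \<partial>lborel) i j L K
    = (\<integral>M. cnj (M$i$j) * (h M * integrand lr lc m R a L K M) \<partial>lborel)"
proof -
  define g where "g M = h M * integrand lr lc m R a (mupd L i j 0) K M" for M
  have split: "h M * integrand lr lc m R a (mupd L i j z) K M = g M * exp (z * cnj (M$i$j))" for z M
    by (simp add: g_def integrand_mupd_left[of _ _ _ _ _ L i j z])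
  have "((\<lambda>z. \<integral>M. g M * exp (z * cnj (M$i$j)) \<partial>lborel) has_field_derivative
      (\<integral>M. cnj (M$i$j) * (g M * exp (L$i$j * cnj (M$i$j))) \<partial>lborel)) (at (L$i$j))"
    by (rule has_field_derivative_integral_mult_exp) (simp_all add: assms flip: split)
  from DERIV_imp_deriv[OF this] show ?thesis
    by (simp add: dL_def flip: split)
qed

lemma Zfun_eq_integral: "Zfun lr lc m R a = (\<lambda>L K. \<integral>M. 1 * integrand lr lc m R a L K M \<partial>lborel)"
  by (simp add: fun_eq_iff Zfun_def)

lemma dK_Zfun:
  fixes lr :: "'r::finite \<Rightarrow> real" and lc :: "'c::finite \<Rightarrow> real"
  assumes "\<forall>L K. integrable lborel (integrand lr lc m R a L K)"
    and "\<forall>L K i j. integrable lborel (\<lambda>M. M$i$j * integrand lr lc m R a L K M)"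
  shows "dK (Zfun lr lc m R a) i j L K = (\<integral>M. M$i$j * integrand lr lc m R a L K M \<partial>lborel)"
  using dK_integral_integrand[where h = "\<lambda>_. 1" and L = L and K = K and i = i and j = j] assms
  unfolding Zfun_eq_integral by simp

lemma dL_Zfun:
  fixes lr :: "'r::finite \<Rightarrow> real" and lc :: "'c::finite \<Rightarrow> real"
  assumes "\<forall>L K. integrable lborel (integrand lr lc m R a L K)"
    and "\<forall>L K i j. integrable lborel (\<lambda>M. cnj (M$i$j) * integrand lr lc m R a L K M)"
  shows "dL (Zfun lr lc m R a) i j L K = (\<integral>M. cnj (M$i$j) * integrand lr lc m R a L K M \<partial>lborel)"
  using dL_integral_integrand[where h = "\<lambda>_. 1" and L = L and K = K and i = i and j = j] assms
  unfolding Zfun_eq_integral by simp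

lemma dL_dK_Zfun:
  fixes lr :: "'r::finite \<Rightarrow> real" and lc :: "'c::finite \<Rightarrow> real"
  assumes "\<forall>L K. integrable lborel (integrand lr lc m R a L K)"
    and "\<forall>L K i j. integrable lborel (\<lambda>M. M$i$j * integrand lr lc m R a L K M)"
    and "\<forall>L K i j i' j'. integrable lborel (\<lambda>M. cnj (M$i$j) * M$i'$j' * integrand lr lc m R a L K M)"
  shows "dL (dK (Zfun lr lc m R a) i' j') i j L K
    = (\<integral>M. cnj (M$i$j) * M$i'$j' * integrand lr lc m R a L K M \<partial>lborel)"
proof -
  have "dK (Zfun lr lc m R a) i' j' = (\<lambda>L K. \<integral>M. M$i'$j' * integrand lr lc m R a L K M \<partial>lborel)"
    using dK_Zfun[OF assms(1,2)] by (simp add: fun_eq_iff)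
  then show ?thesis
    using dL_integral_integrand[where h = "\<lambda>M. M$i'$j'" and L = L and K = K and i = i and j = j] assms(2,3)
    by (simp add: mult.assoc)
qed

section \<open>The Ward identity for the partition function\<close>

text \<open>\<open>ward_term E L K p1' p1\<close> is the function that the operator of the theorem produces under
  the integral sign of \<open>Z\<close>.\<close>

definition ward_term :: "('r \<Rightarrow> 'c::finite \<Rightarrow> real) \<Rightarrow> complex^'c^'r \<Rightarrow> complex^'c^'r \<Rightarrow> 'r \<Rightarrow> 'r
    \<Rightarrow> complex^'c^'r \<Rightarrow> complex" where
  "ward_term E L K p q N = (\<Sum>j\<in>UNIV. complex_of_real (E p j - E q j) * (cnj (N$q$j) * N$p$j)
     + K$q$j * N$p$j - L$p$j * cnj (N$q$j))"

lemma ward_operator_Zfun_eq_integral: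
  fixes lr :: "'r::finite \<Rightarrow> real" and lc :: "'c::finite \<Rightarrow> real"
  assumes I_int: "\<forall>L K. integrable lborel (integrand lr lc m R a L K)"
    and M_int: "\<forall>L K i j. integrable lborel (\<lambda>M. M$i$j * integrand lr lc m R a L K M)"
    and cnj_M_int: "\<forall>L K i j. integrable lborel (\<lambda>M. cnj (M$i$j) * integrand lr lc m R a L K M)"
    and cnj_M_M_int: "\<forall>L K i j i' j'. integrable lborel
      (\<lambda>M. cnj (M$i$j) * M$i'$j' * integrand lr lc m R a L K M)"
  shows "(\<Sum>p2\<in>UNIV. complex_of_real (Ek lr lc m R p1' p2 - Ek lr lc m R p1 p2)
          * dL (dK (Zfun lr lc m R a) p1' p2) p1 p2 L K
      + K$p1$p2 * dK (Zfun lr lc m R a) p1' p2 L K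
      - L$p1'$p2 * dL (Zfun lr lc m R a) p1 p2 L K)
    = (\<integral>M. integrand lr lc m R a L K M * ward_term (Ek lr lc m R) L K p1' p1 M \<partial>lborel)"
proof -
  define I where "I = integrand lr lc m R a L K"
  define E where "E = Ek lr lc m R"
  have "(\<Sum>p2\<in>UNIV. complex_of_real (E p1' p2 - E p1 p2) * dL (dK (Zfun lr lc m R a) p1' p2) p1 p2 L K
      + K$p1$p2 * dK (Zfun lr lc m R a) p1' p2 L K - L$p1'$p2 * dL (Zfun lr lc m R a) p1 p2 L K)
    = (\<Sum>p2\<in>UNIV. \<integral>M. complex_of_real (E p1' p2 - E p1 p2) * (cnj (M$p1$p2) * M$p1'$p2 * I M)
      + K$p1$p2 * (M$p1'$p2 * I M) - L$p1'$p2 * (cnj (M$p1$p2) * I M) \<partial>lborel)"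
    using M_int cnj_M_int cnj_M_M_int
    by (simp add: dL_dK_Zfun[OF I_int M_int cnj_M_M_int] dK_Zfun[OF I_int M_int]
        dL_Zfun[OF I_int cnj_M_int] I_def Bochner_Integration.integral_diff
        Bochner_Integration.integral_add integrable_mult_right)
  also have "\<dots> = (\<integral>M. (\<Sum>p2\<in>UNIV. complex_of_real (E p1' p2 - E p1 p2) * (cnj (M$p1$p2) * M$p1'$p2 * I M)
      + K$p1$p2 * (M$p1'$p2 * I M) - L$p1'$p2 * (cnj (M$p1$p2) * I M)) \<partial>lborel)"
    using M_int cnj_M_int cnj_M_M_int unfolding I_def
    by (intro Bochner_Integration.integral_sum[symmetric] Bochner_Integration.integrable_add
        Bochner_Integration.integrable_diff integrable_mult_right) auto
  also have "\<dots> = (\<integral>M. I M * ward_term E L K p1' p1 M \<partial>lborel)"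
    by (simp add: ward_term_def sum_distrib_left algebra_simps)
  finally show ?thesis
    by (simp add: I_def E_def)
qed

lemma ward_term_eq_gaussian_action_deriv_phase:
  "ward_term E L K p p N = - \<i> * gaussian_action_deriv E L K N (row_mix ((\<lambda>_. 0)(p := \<i>)) id N)"
proof -
  have "gaussian_action_deriv E L K N (row_mix ((\<lambda>_. 0)(p := \<i>)) id N)
      = (\<Sum>i\<in>{p}. \<Sum>j\<in>UNIV. gaussian_action_deriv_entry E L K N (row_mix ((\<lambda>_. 0)(p := \<i>)) id N) i j)"
    by (rule gaussian_action_deriv_row_mix_supported) simp
  then show ?thesis
    by (simp add: ward_term_def gaussian_action_deriv_entry_def sum_distrib_left algebra_simps)
qed

lemma ward_term_eq_gaussian_action_deriv_rotations:
  assumes "p \<noteq> q"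
  shows "ward_term E L K p q N =
    (gaussian_action_deriv E L K N (row_mix ((\<lambda>_. 0)(p := -1, q := 1)) (id(p := q, q := p)) N)
     - \<i> * gaussian_action_deriv E L K N (row_mix ((\<lambda>_. 0)(p := \<i>, q := \<i>)) (id(p := q, q := p)) N)) / 2"
proof -
  define \<sigma> where "\<sigma> = id(p := q, q := p)"
  define d where "d v j = gaussian_action_deriv_entry E L K N (row_mix v \<sigma> N) p j
    + gaussian_action_deriv_entry E L K N (row_mix v \<sigma> N) q j" for v j
  have rows: "gaussian_action_deriv E L K N (row_mix v \<sigma> N) = (\<Sum>j\<in>UNIV. d v j)"
    if "\<And>i. i \<notin> {p, q} \<Longrightarrow> v i = 0" for v
    using gaussian_action_deriv_row_mix_supported[where S = "{p, q}" and v = v, OF that] assms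
    by (simp add: d_def sum.distrib)
  have real: "gaussian_action_deriv E L K N (row_mix ((\<lambda>_. 0)(p := -1, q := 1)) \<sigma> N)
      = (\<Sum>j\<in>UNIV. d ((\<lambda>_. 0)(p := -1, q := 1)) j)"
    and imag: "gaussian_action_deriv E L K N (row_mix ((\<lambda>_. 0)(p := \<i>, q := \<i>)) \<sigma> N)
      = (\<Sum>j\<in>UNIV. d ((\<lambda>_. 0)(p := \<i>, q := \<i>)) j)"
    by (rule rows; simp)+
  have "(gaussian_action_deriv E L K N (row_mix ((\<lambda>_. 0)(p := -1, q := 1)) \<sigma> N)
      - \<i> * gaussian_action_deriv E L K N (row_mix ((\<lambda>_. 0)(p := \<i>, q := \<i>)) \<sigma> N)) / 2
    = (\<Sum>j\<in>UNIV. (d ((\<lambda>_. 0)(p := -1, q := 1)) j - \<i> * d ((\<lambda>_. 0)(p := \<i>, q := \<i>)) j) / 2)"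
    unfolding real imag by (simp add: sum_subtractf sum_distrib_left flip: sum_divide_distrib)
  also have "\<dots> = ward_term E L K p q N"
    unfolding ward_term_def d_def using assms
    by (intro sum.cong refl) (simp add: gaussian_action_deriv_entry_def \<sigma>_def field_simps)
  finally show ?thesis
    by (simp add: \<sigma>_def)
qed

lemma integral_ward_term_eq_0:
  fixes lr :: "'r::finite \<Rightarrow> real" and lc :: "'c::finite \<Rightarrow> real"
  assumes I_int: "integrable lborel (integrand lr lc m R a L K)"
    and M_int: "\<And>i j. integrable lborel (\<lambda>M. M$i$j * integrand lr lc m R a L K M)"
    and cnj_M_int: "\<And>i j. integrable lborel (\<lambda>M. cnj (M$i$j) * integrand lr lc m R a L K M)"
    and cnj_M_M_int: "\<And>i j i' j'. integrable lborel (\<lambda>M. cnj (M$i$j) * M$i'$j' * integrand lr lc m R a L K M)"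
  shows "(\<integral>N. integrand lr lc m R a L K N * ward_term (Ek lr lc m R) L K p q N \<partial>lborel) = 0"
proof -
  define I where "I = integrand lr lc m R a L K"
  define E where "E = Ek lr lc m R"
  define W where "W v \<sigma> = (\<integral>N. I N * gaussian_action_deriv E L K N (row_mix v \<sigma> N) \<partial>lborel)" for v \<sigma>
  have W_int: "integrable lborel (\<lambda>N. I N * gaussian_action_deriv E L K N (row_mix v \<sigma> N))" for v \<sigma>
    unfolding I_def E_def by (rule integrable_gaussian_action_deriv_row_mix[OF M_int cnj_M_int cnj_M_M_int])
  have W_0: "W v \<sigma> = 0"
    if "\<And>i. v i * complex_of_real (w (\<sigma> i)) = v i" "\<And>i. v i * v (\<sigma> i) = - complex_of_real (w i)"
      "\<And>i. \<sigma> (\<sigma> i) = i" "\<And>s. unitary_map (row_rotation v \<sigma> w s :: complex^'c^'r \<Rightarrow> complex^'c^'r)"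
    for v \<sigma> w
    using integral_gaussian_action_deriv_row_mix_eq_0[OF that I_int] W_int
    by (simp add: W_def I_def E_def)
  show ?thesis
  proof (cases "p = q")
    case True
    have "W ((\<lambda>_. 0)(p := \<i>)) id = 0"
      by (rule W_0[where w = "(\<lambda>_. 0)(p := 1)"]) (simp_all add: unitary_map_row_rotation_phase)
    moreover have "(\<integral>N. I N * ward_term E L K p q N \<partial>lborel)
        = (\<integral>N. - \<i> * (I N * gaussian_action_deriv E L K N (row_mix ((\<lambda>_. 0)(p := \<i>)) id N)) \<partial>lborel)"
      unfolding True ward_term_eq_gaussian_action_deriv_phase by (simp only: mult.left_commute)
    then have "(\<integral>N. I N * ward_term E L K p q N \<partial>lborel) = - \<i> * W ((\<lambda>_. 0)(p := \<i>)) id"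
      unfolding W_def by simp
    ultimately show ?thesis
      by (simp add: I_def E_def)
  next
    case False
    define \<sigma> where "\<sigma> = id(p := q, q := p)"
    have "W ((\<lambda>_. 0)(p := -1, q := 1)) \<sigma> = 0"
      using False
      by (intro W_0[where w = "(\<lambda>_. 0)(p := 1, q := 1)"]) (auto simp: \<sigma>_def unitary_map_row_rotation_real)
    moreover have "W ((\<lambda>_. 0)(p := \<i>, q := \<i>)) \<sigma> = 0"
      using False
      by (intro W_0[where w = "(\<lambda>_. 0)(p := 1, q := 1)"]) (auto simp: \<sigma>_def unitary_map_row_rotation_imag)
    moreover have "(\<integral>N. I N * ward_term E L K p q N \<partial>lborel)
        = (W ((\<lambda>_. 0)(p := -1, q := 1)) \<sigma> - \<i> * W ((\<lambda>_. 0)(p := \<i>, q := \<i>)) \<sigma>) / 2"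
    proof -
      have "(\<integral>N. I N * ward_term E L K p q N \<partial>lborel)
        = (\<integral>N. (I N * gaussian_action_deriv E L K N (row_mix ((\<lambda>_. 0)(p := -1, q := 1)) \<sigma> N)
            - \<i> * (I N * gaussian_action_deriv E L K N (row_mix ((\<lambda>_. 0)(p := \<i>, q := \<i>)) \<sigma> N))) / 2 \<partial>lborel)"
        unfolding ward_term_eq_gaussian_action_deriv_rotations[OF False, folded \<sigma>_def]
        by (simp add: algebra_simps)
      then show ?thesis
        unfolding W_def using W_int
        by (simp add: integral_divide_zero Bochner_Integration.integral_diff integrable_mult_right)
    qed
    ultimately show ?thesis
      by (simp add: I_def E_def)
  qed
qed

theorem mainTheorem1:
  fixes lr :: "'r::finite \<Rightarrow> real" and lc :: "'c::finite \<Rightarrow> real"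
    and m :: real and R :: "real \<Rightarrow> real \<Rightarrow> real" and a :: "nat \<Rightarrow> real"
  assumes "CARD('r) = CARD('c)"
    and "inj lr" and "inj lc"
    and "\<forall>M::complex^'c^'r. summable (pot_term a M)"
    and "\<forall>L K. integrable lborel (integrand lr lc m R a L K)"
    and "\<forall>L K i j. integrable lborel (\<lambda>M. M$i$j * integrand lr lc m R a L K M)"
    and "\<forall>L K i j. integrable lborel (\<lambda>M. cnj (M$i$j) * integrand lr lc m R a L K M)"
    and "\<forall>L K i j i' j'. integrable lborel
           (\<lambda>M. cnj (M$i$j) * M$i'$j' * integrand lr lc m R a L K M)"
  shows "\<forall>p1 p1' L K.
    (\<Sum>p2\<in>UNIV.
        complex_of_real (Ek lr lc m R p1' p2 - Ek lr lc m R p1 p2)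
          * dL (dK (Zfun lr lc m R a) p1' p2) p1 p2 L K
      + K$p1$p2 * dK (Zfun lr lc m R a) p1' p2 L K
      - L$p1'$p2 * dL (Zfun lr lc m R a) p1 p2 L K) = 0"
proof (intro allI)
  fix p1 p1' :: 'r and L K :: "complex^'c^'r"
  show "(\<Sum>p2\<in>UNIV.
        complex_of_real (Ek lr lc m R p1' p2 - Ek lr lc m R p1 p2)
          * dL (dK (Zfun lr lc m R a) p1' p2) p1 p2 L K
      + K$p1$p2 * dK (Zfun lr lc m R a) p1' p2 L K
      - L$p1'$p2 * dL (Zfun lr lc m R a) p1 p2 L K) = 0"
    unfolding ward_operator_Zfun_eq_integral[OF assms(5-8)]
    using assms(5-8) by (intro integral_ward_term_eq_0) auto
qed

end
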